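(* Let $\Theta\subset\mathbb R^d$ and let $A:\Theta\to S^d_+(\mathbb R)$ be $L$-Lipschitz with respect to the Frobenius norm. Then for all $\beta>0$, $v\in\mathbb R^d$ and $\theta_1,\theta_2\in\Theta$, \[ \|v\|^2_{A_\beta(\theta_2)}\le\big(3+L\beta^{-1}|\theta_1-\theta_2|\big)\,\|v\|^2_{A_\beta(\theta_1)}. \]
   Context: $S^d_+(\mathbb R)$ is the set of real symmetric positive semidefinite $d\times d$ matrices. For $A\in S^d_+(\mathbb R)$ with spectral decomposition $A=\sum_{j=1}^d\lambda_j u_ju_j^T$ (orthonormal eigenvectors $u_j$) and $\beta>0$, define $A_\beta=\sum_{j=1}^d\max(\lambda_j,\beta)u_ju_j^T$ (eigenvalues below $\beta$ replaced by $\beta$). For a matrix $M\in S^d_+(\mathbb R)$ and $v\in\mathbb R^d$, $\|v\|_M=\sqrt{\langle Mv,v\rangle}$. $|\cdot|$ is the Euclidean norm. *)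

theory Defs
  imports "HOL-Analysis.Analysis"
begin

definition psd :: "real^'d^'d \<Rightarrow> bool" where
  "psd A \<longleftrightarrow> transpose A = A \<and> (\<forall>x. 0 \<le> x \<bullet> (A *v x))"

definition frob_norm :: "real^'d^'d \<Rightarrow> real" where
  "frob_norm A = sqrt (\<Sum>i\<in>UNIV. \<Sum>j\<in>UNIV. (A $ i $ j)\<^sup>2)"

definition outer :: "real^'d \<Rightarrow> real^'d^'d" where
  "outer u = (\<chi> i j. u $ i * u $ j)"

definition orthonormal_family :: "('d \<Rightarrow> real^'d) \<Rightarrow> bool" where
  "orthonormal_family u \<longleftrightarrow> (\<forall>i j. u i \<bullet> u j = (if i = j then 1 else 0))"

text \<open>A_beta: replace eigenvalues below beta by beta in a spectral decomposition
  A = sum_j lambda_j u_j u_j^T (well defined, independent of the decomposition).\<close>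
definition clamp :: "real \<Rightarrow> real^'d^'d \<Rightarrow> real^'d^'d" where
  "clamp \<beta> A = (SOME B. \<exists>u lam. orthonormal_family u \<and>
      A = (\<Sum>j\<in>UNIV. lam j *\<^sub>R outer (u j)) \<and>
      B = (\<Sum>j\<in>UNIV. max (lam j) \<beta> *\<^sub>R outer (u j)))"

definition mnorm_sq :: "real^'d^'d \<Rightarrow> real^'d \<Rightarrow> real" where
  "mnorm_sq M v = (M *v v) \<bullet> v"

end

theory Submission
  imports Defs
begin

text \<open>Write |v|_M^2 for mnorm_sq M v. Clamping raises every eigenvalue to at least \<beta>, so
  \<beta>|v|^2 \<le> |v|_{A_\<beta>}^2 and |v|_A^2 \<le> |v|_{A_\<beta>}^2; for positive semidefinite A it raises each
  eigenvalue by at most \<beta>, so |v|_{A_\<beta>}^2 \<le> |v|_A^2 + \<beta>|v|^2. Chaining these with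
  ||v|_A^2 - |v|_B^2| \<le> |A - B|_F |v|^2 gives
  |v|_{B_\<beta>}^2 \<le> |v|_{A_\<beta>}^2 + |A - B|_F |v|^2 + \<beta>|v|^2, and both error terms are absorbed
  by \<beta>|v|^2 \<le> |v|_{A_\<beta>}^2. As A_\<beta> is defined through a spectral decomposition, the spectral
  theorem for real symmetric matrices is proved first, by repeatedly maximising the Rayleigh
  quotient on the orthogonal complement of the eigenvectors already found.\<close>

lemma symmetric_matrix_inner_swap:
  fixes A :: "real^'n^'n"
  assumes "transpose A = A"
  shows "(A *v x) \<bullet> y = x \<bullet> (A *v y)"
  by (metis assms dot_lmul_matrix vector_transpose_matrix)

lemma quadratic_nonpos_imp_linear_coeff_zero:
  fixes a b :: real
  assumes "\<And>t. a * t + b * t\<^sup>2 \<le> 0"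
  shows "a = 0"
proof (rule ccontr)
  assume "a \<noteq> 0"
  define k where "k = \<bar>b\<bar> + 1"
  define t where "t = a / (2 * k)"
  have "k > 0" by (simp add: k_def)
  have "b * t\<^sup>2 \<ge> - k * t\<^sup>2"
    by (intro mult_right_mono) (auto simp: k_def)
  moreover have "a * t - k * t\<^sup>2 = a\<^sup>2 / (4 * k)"
    using \<open>k > 0\<close> by (simp add: t_def power2_eq_square field_simps)
  moreover have "a\<^sup>2 / (4 * k) > 0" using \<open>k > 0\<close> \<open>a \<noteq> 0\<close> by simp
  ultimately show False using assms[of t] by linarith
qed

lemma rayleigh_maximizer_is_eigenvector:
  fixes A :: "real^'n^'n"
  assumes sym: "transpose A = A" and W: "subspace W" and AW: "\<And>x. x \<in> W \<Longrightarrow> A *v x \<in> W"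
    and x0: "x0 \<in> W" "x0 \<bullet> x0 = 1"
    and max: "\<And>y. y \<in> W \<Longrightarrow> y \<bullet> (A *v y) \<le> (x0 \<bullet> (A *v x0)) * (y \<bullet> y)"
  shows "A *v x0 = (x0 \<bullet> (A *v x0)) *\<^sub>R x0"
proof -
  define \<mu> where "\<mu> = x0 \<bullet> (A *v x0)"
  define w where "w = A *v x0 - \<mu> *\<^sub>R x0"
  \<comment> \<open>Moving from x0 along w \<in> W, the Rayleigh quotient has slope 2|w|^2, which maximality forces to 0.\<close>
  have "w \<in> W" unfolding w_def using W x0(1) AW by (intro subspace_diff subspace_scale) auto
  have wx0: "w \<bullet> x0 = 0"
    using x0(2) by (simp add: w_def \<mu>_def inner_diff_left) (simp add: inner_commute)
  have Awx0: "w \<bullet> (A *v x0) = w \<bullet> w"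
    using wx0 by (simp add: w_def inner_diff_right)
  have swap: "x0 \<bullet> (A *v w) = w \<bullet> (A *v x0)"
    using symmetric_matrix_inner_swap[OF sym, of x0 w] by (simp add: inner_commute)
  have "(2 * (w \<bullet> w)) * t + (w \<bullet> (A *v w) - \<mu> * (w \<bullet> w)) * t\<^sup>2 \<le> 0" for t
  proof -
    have xt: "x0 + t *\<^sub>R w \<in> W" using W x0(1) \<open>w \<in> W\<close> by (intro subspace_add subspace_scale) auto
    have "(x0 + t *\<^sub>R w) \<bullet> (A *v x0 + t *\<^sub>R (A *v w)) \<le> \<mu> * ((x0 + t *\<^sub>R w) \<bullet> (x0 + t *\<^sub>R w))"
      using max[OF xt] by (simp add: \<mu>_def matrix_vector_right_distrib matrix_vector_mult_scaleR)
    then have "\<mu> + 2 * t * (w \<bullet> w) + t\<^sup>2 * (w \<bullet> (A *v w)) \<le> \<mu> * (1 + t\<^sup>2 * (w \<bullet> w))"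
      using x0(2) wx0 inner_commute[of w x0] swap Awx0
      by (simp add: \<mu>_def inner_add_left inner_add_right power2_eq_square algebra_simps)
    then show ?thesis by (simp add: algebra_simps)
  qed
  then have "2 * (w \<bullet> w) = 0" by (rule quadratic_nonpos_imp_linear_coeff_zero)
  then show ?thesis by (simp add: w_def \<mu>_def)
qed

lemma symmetric_matrix_eigenvector_in_invariant_subspace:
  fixes A :: "real^'n^'n"
  assumes sym: "transpose A = A" and W: "subspace W" "W \<noteq> {0}"
    and AW: "\<And>x. x \<in> W \<Longrightarrow> A *v x \<in> W"
  obtains x \<mu> where "x \<in> W" "norm x = 1" "A *v x = \<mu> *\<^sub>R x"
proof -
  define K where "K = sphere 0 1 \<inter> W"
  define f where "f x = x \<bullet> (A *v x)" for x
  have normalize: "y /\<^sub>R norm y \<in> K" if "y \<in> W" "y \<noteq> 0" for y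
    using that W(1) by (auto simp: K_def subspace_scale)
  have "compact K" unfolding K_def using closed_subspace[OF W(1)] by (simp add: compact_Int_closed)
  moreover obtain z where "z \<in> W" "z \<noteq> 0" using W(2) subspace_0[OF W(1)] by blast
  then have "K \<noteq> {}" using normalize by blast
  moreover have "continuous_on K f" unfolding f_def
    by (intro continuous_intros linear_continuous_on matrix_vector_mul_linear)
  ultimately obtain x0 where x0: "x0 \<in> K" and x0max: "\<And>y. y \<in> K \<Longrightarrow> f y \<le> f x0"
    by (metis continuous_attains_sup)
  have x0W: "x0 \<in> W" and x0unit: "x0 \<bullet> x0 = 1" "norm x0 = 1"
    using x0 by (auto simp: K_def norm_eq_1)
  have "y \<bullet> (A *v y) \<le> (x0 \<bullet> (A *v x0)) * (y \<bullet> y)" if "y \<in> W" for y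
  proof (cases "y = 0")
    case False
    have "f (y /\<^sub>R norm y) = f y / (y \<bullet> y)"
      by (simp add: f_def matrix_vector_mult_scaleR power2_norm_eq_inner[symmetric] power2_eq_square divide_inverse)
    moreover have "y \<bullet> y > 0" using False by simp
    ultimately show ?thesis
      using x0max[OF normalize[OF that False]] by (simp add: f_def divide_le_eq)
  qed simp
  from rayleigh_maximizer_is_eigenvector[OF sym W(1) AW x0W x0unit(1) this]
  show thesis by (rule that[OF x0W x0unit(2)])
qed

lemma symmetric_matrix_orthonormal_eigenvectors:
  fixes A :: "real^'n^'n"
  assumes sym: "transpose A = A" and "k \<le> CARD('n)"
  shows "\<exists>S. finite S \<and> card S = k \<and> pairwise orthogonal S \<and>
             (\<forall>x\<in>S. norm x = 1 \<and> (\<exists>\<mu>. A *v x = \<mu> *\<^sub>R x))"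
  using \<open>k \<le> CARD('n)\<close>
proof (induction k)
  case 0
  show ?case by (intro exI[of _ "{}"]) auto
next
  case (Suc k)
  then obtain S where S: "finite S" "card S = k" "pairwise orthogonal S"
      and eig: "\<forall>x\<in>S. norm x = 1 \<and> (\<exists>\<mu>. A *v x = \<mu> *\<^sub>R x)"
    by auto
  define W where "W = {y. \<forall>x\<in>S. orthogonal x y}"
  have "subspace W" unfolding W_def by (rule subspace_orthogonal_to_vectors)
  have "dim S < DIM(real^'n)"
    using dim_le_card[OF span_superset S(1)] Suc.prems S(2) by simp
  then obtain z where "z \<noteq> 0" "\<And>y. y \<in> span S \<Longrightarrow> orthogonal z y"
    using orthogonal_to_subspace_exists by blast
  then have "z \<in> W" "z \<noteq> 0"
    by (auto simp: W_def span_base orthogonal_commute)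
  then have "W \<noteq> {0}" by blast
  have "A *v y \<in> W" if "y \<in> W" for y
  proof -
    have "orthogonal x (A *v y)" if "x \<in> S" for x
    proof -
      obtain \<mu> where "A *v x = \<mu> *\<^sub>R x" using eig \<open>x \<in> S\<close> by blast
      then show ?thesis
        using symmetric_matrix_inner_swap[OF sym, of x y] \<open>y \<in> W\<close> \<open>x \<in> S\<close>
        by (simp add: W_def orthogonal_def)
    qed
    then show ?thesis by (simp add: W_def)
  qed
  then obtain x \<mu> where x: "x \<in> W" "norm x = 1" "A *v x = \<mu> *\<^sub>R x"
    using symmetric_matrix_eigenvector_in_invariant_subspace[OF sym \<open>subspace W\<close> \<open>W \<noteq> {0}\<close>] by blast
  have "x \<notin> S"
    using x(1,2) by (auto simp: W_def orthogonal_def)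
  then show ?case
    using S eig x by (intro exI[of _ "insert x S"])
      (auto simp: pairwise_insert W_def orthogonal_commute)
qed

lemma orthonormal_family_inj:
  assumes "orthonormal_family u"
  shows "inj u"
  by (metis assms injI orthonormal_family_def zero_neq_one)

lemma orthonormal_family_sum_inner:
  assumes "orthonormal_family u"
  shows "(\<Sum>j\<in>UNIV. c j * (u i \<bullet> u j)) = c i"
proof -
  have "(\<Sum>j\<in>UNIV. c j * (u i \<bullet> u j)) = (\<Sum>j\<in>UNIV. if j = i then c i else 0)"
    using assms by (intro sum.cong) (auto simp: orthonormal_family_def)
  then show ?thesis by simp
qed

lemma orthonormal_family_expansion:
  fixes u :: "'n \<Rightarrow> real^'n"
  assumes onf: "orthonormal_family u"
  shows "x = (\<Sum>j\<in>UNIV. (u j \<bullet> x) *\<^sub>R u j)"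
proof -
  have "pairwise orthogonal (range u)"
    using onf by (auto simp: pairwise_def orthogonal_def orthonormal_family_def)
  moreover have "0 \<notin> range u"
    using onf by (auto simp: orthonormal_family_def) (metis inner_zero_left zero_neq_one)
  ultimately have "independent (range u)" using pairwise_orthogonal_independent by blast
  moreover have "card (range u) = CARD('n)"
    using orthonormal_family_inj[OF onf] by (simp add: card_image)
  ultimately have span: "UNIV \<subseteq> span (range u)"
    by (intro card_ge_dim_independent) auto
  define y where "y = x - (\<Sum>j\<in>UNIV. (u j \<bullet> x) *\<^sub>R u j)"
  have "u i \<bullet> (\<Sum>j\<in>UNIV. (u j \<bullet> x) *\<^sub>R u j) = u i \<bullet> x" for i
    using orthonormal_family_sum_inner[OF onf, of "\<lambda>j. u j \<bullet> x"] by (simp add: inner_sum_right)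
  then have "u i \<bullet> y = 0" for i by (simp add: y_def inner_diff_right)
  then have "orthogonal y z" if "z \<in> range u" for z
    using that by (auto simp: orthogonal_def inner_commute)
  then have "orthogonal y y"
    using span by (intro orthogonal_to_span[of y]) auto
  then show ?thesis by (simp add: y_def orthogonal_def)
qed

lemma outer_matrix_vector_mult: "outer u *v x = (u \<bullet> x) *\<^sub>R u"
  by (simp add: vec_eq_iff matrix_vector_mult_def outer_def inner_vec_def sum_distrib_left mult_ac)

lemma sum_scaleR_matrix_vector_mult:
  fixes M :: "'i \<Rightarrow> real^'n^'m"
  shows "(\<Sum>j\<in>F. c j *\<^sub>R M j) *v x = (\<Sum>j\<in>F. c j *\<^sub>R (M j *v x))"
  by (induction F rule: infinite_finite_induct)
    (simp_all add: matrix_vector_mult_add_rdistrib scaleR_matrix_vector_assoc)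

lemma sum_outer_matrix_vector_mult:
  "(\<Sum>j\<in>UNIV. c j *\<^sub>R outer (u j)) *v x = (\<Sum>j\<in>UNIV. (c j * (u j \<bullet> x)) *\<^sub>R u j)"
  by (simp add: sum_scaleR_matrix_vector_mult outer_matrix_vector_mult)

lemma mnorm_sq_sum_outer:
  "mnorm_sq (\<Sum>j\<in>UNIV. c j *\<^sub>R outer (u j)) v = (\<Sum>j\<in>UNIV. c j * (u j \<bullet> v)\<^sup>2)"
  by (simp add: mnorm_sq_def sum_outer_matrix_vector_mult inner_sum_left power2_eq_square mult_ac)

lemma orthonormal_family_parseval:
  assumes "orthonormal_family u"
  shows "v \<bullet> v = (\<Sum>j\<in>UNIV. (u j \<bullet> v)\<^sup>2)"
proof -
  have "v \<bullet> v = (\<Sum>j\<in>UNIV. (u j \<bullet> v) *\<^sub>R u j) \<bullet> v"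
    using orthonormal_family_expansion[OF assms, of v] by simp
  also have "\<dots> = (\<Sum>j\<in>UNIV. (u j \<bullet> v)\<^sup>2)"
    by (simp add: inner_sum_left power2_eq_square)
  finally show ?thesis .
qed

lemma symmetric_matrix_spectral_decomposition:
  fixes A :: "real^'n^'n"
  assumes sym: "transpose A = A"
  obtains u lam where "orthonormal_family u" "A = (\<Sum>j\<in>UNIV. lam j *\<^sub>R outer (u j))"
proof -
  obtain S where S: "finite S" "card S = CARD('n)" "pairwise orthogonal S"
      and eig: "\<forall>x\<in>S. norm x = 1 \<and> (\<exists>\<mu>. A *v x = \<mu> *\<^sub>R x)"
    using symmetric_matrix_orthonormal_eigenvectors[OF sym order.refl] by blast
  obtain u where u: "bij_betw u (UNIV::'n set) S"
    using finite_same_card_bij[of "UNIV::'n set" S] S by auto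
  then have uS: "u j \<in> S" for j by (auto dest: bij_betwE)
  have onf: "orthonormal_family u"
    unfolding orthonormal_family_def
  proof (intro allI)
    fix i j
    show "u i \<bullet> u j = (if i = j then 1 else 0)"
    proof (cases "i = j")
      case True
      then show ?thesis using eig uS by (simp add: norm_eq_1)
    next
      case False
      then have "u i \<noteq> u j" using u by (metis bij_betw_def injD)
      then show ?thesis using False S(3) uS by (auto simp: pairwise_def orthogonal_def)
    qed
  qed
  have "\<forall>j. \<exists>\<mu>. A *v u j = \<mu> *\<^sub>R u j" using eig uS by blast
  then obtain lam where eigval: "\<And>j. A *v u j = lam j *\<^sub>R u j" by metis
  have "A *v x = (\<Sum>j\<in>UNIV. lam j *\<^sub>R outer (u j)) *v x" for x
  proof -
    have "A *v x = A *v (\<Sum>j\<in>UNIV. (u j \<bullet> x) *\<^sub>R u j)"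
      using orthonormal_family_expansion[OF onf, of x] by simp
    also have "\<dots> = (\<Sum>j\<in>UNIV. (u j \<bullet> x) *\<^sub>R (A *v u j))"
      by (simp add: linear_sum[OF matrix_vector_mul_linear] matrix_vector_mult_scaleR)
    also have "\<dots> = (\<Sum>j\<in>UNIV. lam j *\<^sub>R outer (u j)) *v x"
      by (simp add: sum_outer_matrix_vector_mult eigval mult.commute)
    finally show ?thesis .
  qed
  then have "A = (\<Sum>j\<in>UNIV. lam j *\<^sub>R outer (u j))" by (simp add: matrix_eq)
  with onf show thesis by (rule that)
qed

lemma clamp_spectral:
  fixes A :: "real^'n^'n"
  assumes "transpose A = A"
  obtains u lam where "orthonormal_family u" "A = (\<Sum>j\<in>UNIV. lam j *\<^sub>R outer (u j))"
    "clamp \<beta> A = (\<Sum>j\<in>UNIV. max (lam j) \<beta> *\<^sub>R outer (u j))"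
proof -
  obtain u lam where "orthonormal_family u" "A = (\<Sum>j\<in>UNIV. lam j *\<^sub>R outer (u j))"
    using symmetric_matrix_spectral_decomposition[OF assms] .
  then have "\<exists>B u lam. orthonormal_family u \<and> A = (\<Sum>j\<in>UNIV. lam j *\<^sub>R outer (u j)) \<and>
      B = (\<Sum>j\<in>UNIV. max (lam j) \<beta> *\<^sub>R outer (u j))"
    by blast
  from someI_ex[OF this] show thesis
    unfolding clamp_def[symmetric] using that by blast
qed

lemma psd_spectral_coeff_nonneg:
  assumes "psd A" "orthonormal_family u" "A = (\<Sum>j\<in>UNIV. lam j *\<^sub>R outer (u j))"
  shows "0 \<le> lam j"
proof -
  have "mnorm_sq A (u j) = (\<Sum>i\<in>UNIV. lam i * (u i \<bullet> u j)\<^sup>2)"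
    by (simp only: assms(3) mnorm_sq_sum_outer)
  also have "\<dots> = (\<Sum>i\<in>UNIV. if i = j then lam j else 0)"
    using assms(2) by (intro sum.cong) (auto simp: orthonormal_family_def)
  finally have "lam j = mnorm_sq A (u j)" by simp
  also have "\<dots> \<ge> 0" using assms(1) by (simp add: psd_def mnorm_sq_def inner_commute)
  finally show ?thesis .
qed

lemma mnorm_sq_clamp_lower:
  fixes A :: "real^'n^'n"
  assumes "transpose A = A"
  shows "\<beta> * (v \<bullet> v) \<le> mnorm_sq (clamp \<beta> A) v" and "mnorm_sq A v \<le> mnorm_sq (clamp \<beta> A) v"
proof -
  obtain u lam where u: "orthonormal_family u" and A: "A = (\<Sum>j\<in>UNIV. lam j *\<^sub>R outer (u j))"
    and clamp: "clamp \<beta> A = (\<Sum>j\<in>UNIV. max (lam j) \<beta> *\<^sub>R outer (u j))"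
    using clamp_spectral[OF assms] .
  show "\<beta> * (v \<bullet> v) \<le> mnorm_sq (clamp \<beta> A) v"
    unfolding clamp mnorm_sq_sum_outer orthonormal_family_parseval[OF u, of v] sum_distrib_left
    by (intro sum_mono mult_right_mono) auto
  have "mnorm_sq A v = (\<Sum>j\<in>UNIV. lam j * (u j \<bullet> v)\<^sup>2)"
    by (simp only: A mnorm_sq_sum_outer)
  then show "mnorm_sq A v \<le> mnorm_sq (clamp \<beta> A) v"
    unfolding clamp mnorm_sq_sum_outer by (auto intro!: sum_mono mult_right_mono)
qed

lemma mnorm_sq_clamp_nonneg:
  fixes A :: "real^'n^'n"
  assumes "transpose A = A" "0 \<le> \<beta>"
  shows "0 \<le> mnorm_sq (clamp \<beta> A) v"
  by (rule order.trans[OF mult_nonneg_nonneg[OF assms(2) inner_ge_zero] mnorm_sq_clamp_lower(1)[OF assms(1)]])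

lemma mnorm_sq_clamp_upper:
  assumes "psd A" "0 \<le> \<beta>"
  shows "mnorm_sq (clamp \<beta> A) v \<le> mnorm_sq A v + \<beta> * (v \<bullet> v)"
proof -
  obtain u lam where u: "orthonormal_family u" and A: "A = (\<Sum>j\<in>UNIV. lam j *\<^sub>R outer (u j))"
    and clamp: "clamp \<beta> A = (\<Sum>j\<in>UNIV. max (lam j) \<beta> *\<^sub>R outer (u j))"
    using clamp_spectral assms(1) unfolding psd_def by blast
  have "max (lam j) \<beta> \<le> lam j + \<beta>" for j
    using psd_spectral_coeff_nonneg[OF assms(1) u A] assms(2) by (simp add: max_def)
  then have "mnorm_sq (clamp \<beta> A) v \<le> (\<Sum>j\<in>UNIV. (lam j + \<beta>) * (u j \<bullet> v)\<^sup>2)"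
    unfolding clamp mnorm_sq_sum_outer by (intro sum_mono mult_right_mono) auto
  also have "\<dots> = mnorm_sq A v + \<beta> * (v \<bullet> v)"
    unfolding A mnorm_sq_sum_outer orthonormal_family_parseval[OF u, of v]
    by (simp add: distrib_right sum.distrib sum_distrib_left)
  finally show ?thesis .
qed

lemma frob_norm_eq_norm: "frob_norm M = norm M"
  by (simp add: frob_norm_def norm_vec_def L2_set_def sum_nonneg power2_norm_eq_inner)

lemma norm_matrix_vector_mult_le:
  fixes M :: "real^'n^'m"
  shows "norm (M *v v) \<le> norm M * norm v"
proof -
  have "norm (M *v v) \<le> norm (norm v *\<^sub>R M)"
  proof (rule norm_le_componentwise_cart)
    fix i
    show "norm ((M *v v) $ i) \<le> norm ((norm v *\<^sub>R M) $ i)"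
      using Cauchy_Schwarz_ineq2[of "M $ i" v] by (simp add: matrix_vector_mul_component mult.commute)
  qed
  then show ?thesis by (simp add: mult.commute)
qed

lemma abs_mnorm_sq_le_frob_norm: "\<bar>mnorm_sq M v\<bar> \<le> frob_norm M * (v \<bullet> v)"
proof -
  have "\<bar>mnorm_sq M v\<bar> \<le> norm (M *v v) * norm v"
    unfolding mnorm_sq_def by (rule Cauchy_Schwarz_ineq2)
  also have "\<dots> \<le> norm M * norm v * norm v"
    by (intro mult_right_mono norm_matrix_vector_mult_le) simp
  finally show ?thesis
    by (simp add: frob_norm_eq_norm power2_norm_eq_inner[symmetric] power2_eq_square mult.assoc)
qed

lemma mnorm_sq_le_add_frob_norm_diff:
  "mnorm_sq B v \<le> mnorm_sq A v + frob_norm (A - B) * (v \<bullet> v)"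
proof -
  have "mnorm_sq (A - B) v = mnorm_sq A v - mnorm_sq B v"
    by (simp add: mnorm_sq_def matrix_vector_mult_diff_rdistrib inner_diff_left)
  then show ?thesis using abs_mnorm_sq_le_frob_norm[of "A - B" v] by linarith
qed

lemma mnorm_sq_clamp_perturbation:
  fixes A B :: "real^'n^'n"
  assumes "transpose A = A" "psd B" "0 < \<beta>"
  shows "mnorm_sq (clamp \<beta> B) v \<le> (3 + frob_norm (A - B) / \<beta>) * mnorm_sq (clamp \<beta> A) v"
proof -
  define a where "a = mnorm_sq (clamp \<beta> A) v"
  have low: "\<beta> * (v \<bullet> v) \<le> a" "mnorm_sq A v \<le> a"
    using mnorm_sq_clamp_lower[OF assms(1)] by (simp_all add: a_def)
  have "0 \<le> a"
    unfolding a_def using assms(3) by (intro mnorm_sq_clamp_nonneg[OF assms(1)]) simp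
  have "frob_norm (A - B) * (v \<bullet> v) = frob_norm (A - B) / \<beta> * (\<beta> * (v \<bullet> v))"
    using \<open>0 < \<beta>\<close> by simp
  also have "\<dots> \<le> frob_norm (A - B) / \<beta> * a"
    using low(1) \<open>0 < \<beta>\<close> by (intro mult_left_mono) (simp_all add: frob_norm_eq_norm)
  finally have "mnorm_sq (clamp \<beta> B) v \<le> a + frob_norm (A - B) / \<beta> * a + a"
    using mnorm_sq_clamp_upper[OF assms(2), of \<beta> v] mnorm_sq_le_add_frob_norm_diff[of B v A] low
      \<open>0 < \<beta>\<close> by linarith
  also have "\<dots> \<le> (3 + frob_norm (A - B) / \<beta>) * a"
    using \<open>0 \<le> a\<close> by (simp add: algebra_simps)
  finally show ?thesis by (simp add: a_def)
qed

theorem mainTheorem3: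
  fixes \<Theta> :: "(real^'d) set" and A :: "real^'d \<Rightarrow> real^'d^'d" and L :: real
  assumes psdA: "\<forall>\<theta>\<in>\<Theta>. psd (A \<theta>)"
    and lip: "\<forall>\<theta>1\<in>\<Theta>. \<forall>\<theta>2\<in>\<Theta>. frob_norm (A \<theta>1 - A \<theta>2) \<le> L * norm (\<theta>1 - \<theta>2)"
  shows "\<forall>\<beta>>0. \<forall>v. \<forall>\<theta>1\<in>\<Theta>. \<forall>\<theta>2\<in>\<Theta>.
           mnorm_sq (clamp \<beta> (A \<theta>2)) v
             \<le> (3 + L / \<beta> * norm (\<theta>1 - \<theta>2)) * mnorm_sq (clamp \<beta> (A \<theta>1)) v"
proof (intro allI impI ballI)
  fix \<beta> :: real and v \<theta>1 \<theta>2
  assume "0 < \<beta>" "\<theta>1 \<in> \<Theta>" "\<theta>2 \<in> \<Theta>"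
  then have psd1: "psd (A \<theta>1)" and psd2: "psd (A \<theta>2)" using psdA by auto
  have "mnorm_sq (clamp \<beta> (A \<theta>2)) v
      \<le> (3 + frob_norm (A \<theta>1 - A \<theta>2) / \<beta>) * mnorm_sq (clamp \<beta> (A \<theta>1)) v"
    using psd1 psd2 \<open>0 < \<beta>\<close> by (intro mnorm_sq_clamp_perturbation) (simp_all add: psd_def)
  also have "\<dots> \<le> (3 + L / \<beta> * norm (\<theta>1 - \<theta>2)) * mnorm_sq (clamp \<beta> (A \<theta>1)) v"
  proof (rule mult_right_mono)
    show "0 \<le> mnorm_sq (clamp \<beta> (A \<theta>1)) v"
      using psd1 \<open>0 < \<beta>\<close> unfolding psd_def by (intro mnorm_sq_clamp_nonneg) auto
    show "3 + frob_norm (A \<theta>1 - A \<theta>2) / \<beta> \<le> 3 + L / \<beta> * norm (\<theta>1 - \<theta>2)"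
      using lip \<open>\<theta>1 \<in> \<Theta>\<close> \<open>\<theta>2 \<in> \<Theta>\<close> \<open>0 < \<beta>\<close> by (simp add: divide_right_mono)
  qed
  finally show "mnorm_sq (clamp \<beta> (A \<theta>2)) v
      \<le> (3 + L / \<beta> * norm (\<theta>1 - \<theta>2)) * mnorm_sq (clamp \<beta> (A \<theta>1)) v" .
qed

end
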